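(* On $\mathcal H=\mathbb C^3$ with orthonormal basis $\{|0\rangle,|1\rangle,|2\rangle\}$, let $A_1=\tfrac14\big(2|0\rangle\langle0|+|2\rangle\langle2|+\sqrt2(|0\rangle\langle2|+|2\rangle\langle0|)\big)$, $A_2=I-A_1$, $B_1=\tfrac12\big(2|0\rangle\langle0|+|2\rangle\langle2|\big)$, $B_2=I-B_1$. Then there is no POVM $\{G_\lambda\}_\lambda$ with $\|G_\lambda\|=1$ for all $\lambda$ such that both $\{A_a\}$ and $\{B_b\}$ are classical post-processings of $\{G_\lambda\}$; consequently the set $\{\{A_a\},\{B_b\}\}$ allows for a proof of contextuality of quantum theory.
   Context: $\|\cdot\|$ is the operator norm. A classical post-processing of $\{G_\lambda\}$ is a POVM $A_k=\sum_\lambda p(k|\lambda)G_\lambda$ with $p(\cdot|\lambda)$ probability distributions. A set of observables $\mathcal A$ allows for a proof of contextuality of quantum theory if there do not exist a POVM $\{G_\lambda\}$ and states $\{\sigma_\lambda\}$ (finite index set) with $A_k=\sum_\lambda\mathrm{tr}[\sigma_\lambda A_k]G_\lambda$ for all $\{A_k\}\in\mathcal A$ and all $k$. *)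

theory Defs
  imports "HOL-Analysis.Analysis"
begin

text \<open>Operators on the Hilbert space C^3, represented as 3x3 complex matrices;
 the basis vectors |0>,|1>,|2> correspond to the indices 0,1,2 of the type 3.\<close>

type_synonym cmat = "complex^3^3"

definition ket :: "3 \<Rightarrow> complex^3" where
  "ket i = (\<chi> j. if j = i then 1 else 0)"

definition ketbra :: "3 \<Rightarrow> 3 \<Rightarrow> cmat" where
  "ketbra i j = (\<chi> r c. ket i $ r * cnj (ket j $ c))"

definition csmult :: "complex \<Rightarrow> cmat \<Rightarrow> cmat" where
  "csmult a M = (\<chi> r c. a * M $ r $ c)"

definition cinner :: "complex^3 \<Rightarrow> complex^3 \<Rightarrow> complex" where
  "cinner x y = (\<Sum>i\<in>UNIV. cnj (x $ i) * y $ i)"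

definition psd :: "cmat \<Rightarrow> bool" where
  "psd M \<longleftrightarrow> (\<forall>x. cinner x (M *v x) \<in> \<real> \<and> 0 \<le> Re (cinner x (M *v x)))"

definition trace :: "cmat \<Rightarrow> complex" where
  "trace M = (\<Sum>i\<in>UNIV. M $ i $ i)"

definition density :: "cmat \<Rightarrow> bool" where
  "density \<sigma> \<longleftrightarrow> psd \<sigma> \<and> trace \<sigma> = 1"

definition opnorm :: "cmat \<Rightarrow> real" where
  "opnorm M = onorm (\<lambda>x. M *v x)"

definition povm :: "nat set \<Rightarrow> (nat \<Rightarrow> cmat) \<Rightarrow> bool" where
  "povm I G \<longleftrightarrow> finite I \<and> (\<forall>i\<in>I. psd (G i)) \<and> (\<Sum>i\<in>I. G i) = mat 1"

definition postproc :: "nat set \<Rightarrow> (nat \<Rightarrow> cmat) \<Rightarrow> nat set \<Rightarrow> (nat \<Rightarrow> cmat) \<Rightarrow> bool" where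
  "postproc K A L G \<longleftrightarrow> (\<exists>p :: nat \<Rightarrow> nat \<Rightarrow> real.
      (\<forall>l\<in>L. (\<forall>k\<in>K. 0 \<le> p k l) \<and> (\<Sum>k\<in>K. p k l) = 1) \<and>
      (\<forall>k\<in>K. A k = (\<Sum>l\<in>L. csmult (complex_of_real (p k l)) (G l))))"

definition allows_contextuality_proof :: "(nat set \<times> (nat \<Rightarrow> cmat)) set \<Rightarrow> bool" where
  "allows_contextuality_proof \<A> \<longleftrightarrow>
     \<not> (\<exists>L G \<sigma>. povm L G \<and> (\<forall>l\<in>L. density (\<sigma> l)) \<and>
          (\<forall>(K, A)\<in>\<A>. \<forall>k\<in>K. A k = (\<Sum>l\<in>L. csmult (trace (\<sigma> l ** A k)) (G l))))"

definition A1 :: cmat where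
  "A1 = csmult (1/4) (csmult 2 (ketbra 0 0) + ketbra 2 2
          + csmult (complex_of_real (sqrt 2)) (ketbra 0 2 + ketbra 2 0))"

definition B1 :: cmat where
  "B1 = csmult (1/2) (csmult 2 (ketbra 0 0) + ketbra 2 2)"

definition Aobs :: "nat \<Rightarrow> cmat" where
  "Aobs k = (if k = 1 then A1 else mat 1 - A1)"

definition Bobs :: "nat \<Rightarrow> cmat" where
  "Bobs k = (if k = 1 then B1 else mat 1 - B1)"

end

theory Submission
  imports Defs
begin

text \<open>
  \<open>A\<^sub>1 = |u\<rangle>\<langle>u|/4\<close> with \<open>u = \<surd>2|0\<rangle> + |2\<rangle>\<close> has rank one, so every effect \<open>G\<^sub>\<lambda>\<close>
  that contributes to \<open>A\<^sub>1\<close> with positive weight vanishes on \<open>ker A\<^sub>1\<close> and is a multiple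
  \<open>d A\<^sub>1\<close>. Since \<open>\<langle>0|G\<^sub>\<lambda>|0\<rangle> > 0 = \<langle>0|B\<^sub>2|0\<rangle>\<close>, such a \<open>G\<^sub>\<lambda>\<close> is sent to outcome 1 of
  \<open>B\<close> with certainty. Both contradictions come from evaluating at \<open>u\<close>, where \<open>\<langle>u|A\<^sub>1|u\<rangle> = 9/4\<close> and
  \<open>\<langle>u|B\<^sub>1|u\<rangle> = 5/2\<close>. If \<open>\<parallel>G\<^sub>\<lambda>\<parallel> = 1\<close> then \<open>d = 4/3\<close>, so \<open>\<langle>u|B\<^sub>1|u\<rangle> \<ge> 9d/4 = 3\<close>.
  In a noncontextual model the weights are \<open>tr[\<sigma>\<^sub>\<lambda> A\<^sub>1]\<close> and \<open>tr[\<sigma>\<^sub>\<lambda> B\<^sub>1]\<close>; a state with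
  \<open>tr[\<sigma> B\<^sub>2] = 0\<close> is \<open>|0\<rangle>\<langle>0|\<close>, whose weights are \<open>1/2\<close> and \<open>1\<close>, so
  \<open>\<langle>u|A\<^sub>1|u\<rangle> \<le> \<langle>u|B\<^sub>1|u\<rangle>/2\<close>, which is false.
\<close>

lemma sum_UNIV_3: "sum f (UNIV::3 set) = f 0 + f 1 + f 2"
proof -
  have "(3::3) = 0" by simp
  then show ?thesis unfolding sum_3 by (metis add.commute add.left_commute)
qed

lemma all_UNIV_3: "(\<forall>i::3. P i) \<longleftrightarrow> P 0 \<and> P 1 \<and> P 2"
proof -
  have "(3::3) = 0" by simp
  then show ?thesis using forall_3[of P] by metis
qed

lemma cinner_add_left: "cinner (x + y) z = cinner x z + cinner y z"
  by (simp add: cinner_def sum.distrib algebra_simps)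

lemma cinner_add_right: "cinner z (x + y) = cinner z x + cinner z y"
  by (simp add: cinner_def sum.distrib algebra_simps)

lemma cinner_scale_left: "cinner (c *s x) y = cnj c * cinner x y"
  by (simp add: cinner_def sum_distrib_left algebra_simps)

lemma cinner_scale_right: "cinner x (c *s y) = c * cinner x y"
  by (simp add: cinner_def sum_distrib_left algebra_simps)

lemma cinner_commute: "cinner x y = cnj (cinner y x)"
  by (simp add: cinner_def mult.commute)

lemma cinner_self: "cinner x x = complex_of_real ((norm x)\<^sup>2)"
proof -
  have "cnj z * z = complex_of_real ((cmod z)\<^sup>2)" for z
    by (metis complex_norm_square mult.commute of_real_power)
  then show ?thesis
    by (simp add: cinner_def norm_vec_def L2_set_def sum_nonneg of_real_sum)
qed

lemma norm_cinner_le: "cmod (cinner x y) \<le> norm x * norm y"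
proof -
  have "cmod (cinner x y) \<le> (\<Sum>i\<in>UNIV. \<bar>cmod (x $ i)\<bar> * \<bar>cmod (y $ i)\<bar>)"
    unfolding cinner_def by (rule order_trans[OF norm_sum]) (simp add: norm_mult)
  also have "\<dots> \<le> norm x * norm y"
    unfolding norm_vec_def by (rule L2_set_mult_ineq)
  finally show ?thesis .
qed

lemma norm_vector_scalar_mult: "norm (c *s x) = cmod c * norm (x :: complex^'n)"
  by (simp add: norm_vec_def L2_set_right_distrib norm_mult)

lemma matrix_vector_mult_csmult: "csmult c M *v x = c *s (M *v x)"
  by (simp add: vec_eq_iff matrix_vector_mult_def csmult_def sum_distrib_left mult.assoc)

lemma matrix_vector_mult_ket: "((M::cmat) *v ket j) $ i = M $ i $ j"
  by (simp add: matrix_vector_mult_def ket_def if_distrib cong: if_cong)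

lemma cinner_ket: "cinner (ket i) y = y $ i"
proof -
  have "cnj (ket i $ j) * y $ j = (if j = i then y $ i else 0)" for j
    by (simp add: ket_def)
  then show ?thesis
    unfolding cinner_def by simp
qed

definition qform :: "cmat \<Rightarrow> complex^3 \<Rightarrow> real" where
  "qform M x = Re (cinner x (M *v x))"

lemma qform_add: "qform (M + N) x = qform M x + qform N x"
  by (simp add: qform_def matrix_vector_mult_add_rdistrib cinner_add_right)

lemma qform_csmult_of_real: "qform (csmult (complex_of_real r) M) x = r * qform M x"
  by (simp add: qform_def matrix_vector_mult_csmult cinner_scale_right)

lemma psd_cinner_real: "psd M \<Longrightarrow> Im (cinner x (M *v x)) = 0"
  by (simp add: psd_def complex_is_Real_iff)

lemma psd_qform_nonneg: "psd M \<Longrightarrow> 0 \<le> qform M x"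
  by (simp add: psd_def qform_def)

lemma qform_csmult: "psd M \<Longrightarrow> qform (csmult c M) x = Re c * qform M x"
  using psd_cinner_real[of M x] by (simp add: qform_def matrix_vector_mult_csmult cinner_scale_right)

lemma qform_sum:
  assumes "finite L" "\<forall>l\<in>L. psd (G l)"
  shows "qform (\<Sum>l\<in>L. csmult (c l) (G l)) x = (\<Sum>l\<in>L. Re (c l) * qform (G l) x)"
  using assms
proof (induction L rule: finite_induct)
  case empty
  show ?case by (simp add: qform_def cinner_def)
qed (simp add: qform_add qform_csmult)

lemma qform_sum_term_le:
  assumes "finite L" "\<forall>l\<in>L. psd (G l)" "\<forall>l\<in>L. 0 \<le> Re (c l)" "l \<in> L"
  shows "Re (c l) * qform (G l) x \<le> qform (\<Sum>l\<in>L. csmult (c l) (G l)) x"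
  unfolding qform_sum[OF assms(1,2)]
  by (rule member_le_sum) (use assms psd_qform_nonneg in auto)

lemma cinner_mult_add_scaled:
  "cinner (x + c *s y) (M *v (x + c *s y)) =
     cinner x (M *v x) + c * cinner x (M *v y) + cnj c * cinner y (M *v x)
     + cnj c * c * cinner y (M *v y)"
  by (simp add: matrix_vector_right_distrib vector_scalar_commute cinner_add_left
      cinner_add_right cinner_scale_left cinner_scale_right algebra_simps)

lemma psd_hermitian:
  assumes "psd M"
  shows "cinner x (M *v y) = cnj (cinner y (M *v x))"
proof -
  have "Im (cinner z (M *v z)) = 0" for z
    using psd_cinner_real[OF assms] .
  from this[of "x + 1 *s y"] this[of "x + \<i> *s y"] this[of x] this[of y] show ?thesis
    unfolding cinner_mult_add_scaled by (simp add: complex_eq_iff)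
qed

lemma psd_hermitian_entry: "psd M \<Longrightarrow> M $ i $ j = cnj (M $ j $ i)"
  using psd_hermitian[of M "ket i" "ket j"] by (simp add: cinner_ket matrix_vector_mult_ket)

lemma psd_diag_entry: "psd M \<Longrightarrow> M $ i $ i = complex_of_real (qform M (ket i))"
  using psd_cinner_real[of M "ket i"]
  by (simp add: qform_def cinner_ket matrix_vector_mult_ket complex_eq_iff)

text \<open>Otherwise the form would be negative at \<open>x + s *s M x\<close> for a suitable \<open>s < 0\<close>.\<close>
lemma psd_qform_eq_0_imp_kernel:
  assumes "psd M" "qform M x = 0"
  shows "M *v x = 0"
proof -
  define y where "y = M *v x"
  define n where "n = (norm y)\<^sup>2"
  define R where "R = qform M y"
  have "R \<ge> 0"
    unfolding R_def using psd_qform_nonneg[OF assms(1)] .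
  have xy: "cinner y (M *v x) = complex_of_real n"
    unfolding n_def y_def[symmetric] cinner_self ..
  then have yx: "cinner x (M *v y) = complex_of_real n"
    using psd_hermitian[OF assms(1), of x y] by simp
  have key: "0 \<le> 2 * s * n + s * s * R" for s :: real
  proof -
    have "0 \<le> qform M (x + complex_of_real s *s y)"
      by (rule psd_qform_nonneg[OF assms(1)])
    also have "\<dots> = 2 * s * n + s * s * R"
      using assms(2) unfolding qform_def cinner_mult_add_scaled xy yx R_def by simp
    finally show ?thesis .
  qed
  have "n = 0"
  proof (rule ccontr)
    assume "n \<noteq> 0"
    then have "n > 0"
      unfolding n_def by simp
    define s where "s = - n / (R + 1)"
    have "s < 0" and "s * R > - n"
      unfolding s_def using \<open>n > 0\<close> \<open>R \<ge> 0\<close> by (simp_all add: field_simps)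
    then have "s * (2 * n + s * R) < 0"
      using \<open>n > 0\<close> by (simp add: mult_neg_pos)
    with key[of s] show False
      by (simp add: algebra_simps)
  qed
  then show ?thesis
    unfolding n_def y_def by simp
qed

text \<open>\<open>A1 = |uA\<rangle>\<langle>uA|/4\<close>, and \<open>wA\<close>, \<open>|1\<rangle>\<close> span its kernel.\<close>

definition uA :: "complex^3" where
  "uA = (\<chi> i. if i = 0 then complex_of_real (sqrt 2) else if i = 2 then 1 else 0)"

definition wA :: "complex^3" where
  "wA = (\<chi> i. if i = 0 then 1 else if i = 2 then - complex_of_real (sqrt 2) else 0)"

lemma sqrt2_mult_sqrt2 [simp]: "complex_of_real (sqrt 2) * complex_of_real (sqrt 2) = 2"
  by (simp flip: of_real_mult)

lemma A1_entries:
  "A1 $ 0 $ 0 = 1/2" "A1 $ 0 $ 1 = 0" "A1 $ 0 $ 2 = complex_of_real (sqrt 2) / 4"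
  "A1 $ 1 $ 0 = 0" "A1 $ 1 $ 1 = 0" "A1 $ 1 $ 2 = 0"
  "A1 $ 2 $ 0 = complex_of_real (sqrt 2) / 4" "A1 $ 2 $ 1 = 0" "A1 $ 2 $ 2 = 1/4"
  by (simp_all add: A1_def csmult_def ketbra_def ket_def)

lemma A1_nonzero: "A1 \<noteq> 0"
proof
  assume "A1 = 0"
  then show False
    using A1_entries(1) by simp
qed

lemma A1_mult_vec: "A1 *v x = (cinner uA x / 4) *s uA"
  by (simp add: vec_eq_iff all_UNIV_3 matrix_vector_mult_def vector_scalar_mult_def
      cinner_def uA_def A1_entries sum_UNIV_3 algebra_simps)

lemma qform_A1: "qform A1 x = (cmod (cinner uA x))\<^sup>2 / 4"
proof -
  have "cinner x (A1 *v x) = complex_of_real ((cmod (cinner uA x))\<^sup>2 / 4)"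
    using cinner_commute[of x uA] by (simp add: A1_mult_vec cinner_scale_right
        flip: complex_norm_square)
  then show ?thesis
    unfolding qform_def by (simp only: Re_complex_of_real)
qed

lemma qform_A1_kernel: "qform A1 wA = 0" "qform A1 (ket 1) = 0"
  by (simp_all add: qform_A1 cinner_def uA_def wA_def ket_def sum_UNIV_3)

lemma qform_A1_values: "qform A1 (ket 0) = 1/2" "qform A1 uA = 9/4"
proof -
  have "cinner uA (ket 0) = complex_of_real (sqrt 2)"
    using cinner_commute[of uA "ket 0"] by (simp add: cinner_ket uA_def)
  moreover have "cinner uA uA = 3"
    by (simp add: cinner_def sum_UNIV_3 uA_def)
  ultimately show "qform A1 (ket 0) = 1/2" "qform A1 uA = 9/4"
    by (simp_all add: qform_A1)
qed

lemma qform_B1_uA: "qform B1 uA = 5/2"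
  by (simp add: qform_def cinner_def B1_def uA_def sum_UNIV_3 matrix_vector_mult_def csmult_def
      ketbra_def ket_def algebra_simps)

lemma qform_B2_ket0: "qform (mat 1 - B1) (ket 0) = 0"
  by (simp add: qform_def cinner_def B1_def sum_UNIV_3 matrix_vector_mult_def csmult_def
      ketbra_def ket_def mat_def)

lemma norm_uA: "norm uA = sqrt 3"
  by (simp add: norm_vec_def L2_set_def sum_UNIV_3 uA_def)

lemma opnorm_scaled_A1_le:
  assumes "0 \<le> d"
  shows "opnorm (csmult (complex_of_real d) A1) \<le> 3/4 * d"
  unfolding opnorm_def
proof (rule onorm_le)
  fix x
  have "norm (csmult (complex_of_real d) A1 *v x) = d / 4 * cmod (cinner uA x) * sqrt 3"
    using assms by (simp add: matrix_vector_mult_csmult A1_mult_vec norm_vector_scalar_mult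
      norm_mult norm_divide norm_uA)
  also have "\<dots> \<le> d / 4 * (sqrt 3 * norm x) * sqrt 3"
    using norm_cinner_le[of uA x] assms by (intro mult_right_mono mult_left_mono) (auto simp: norm_uA)
  also have "\<dots> = 3/4 * d * norm x"
    by (simp add: algebra_simps)
  finally show "norm (csmult (complex_of_real d) A1 *v x) \<le> 3/4 * d * norm x" .
qed

lemma psd_eq_scaled_A1:
  assumes G: "psd G" and "qform G wA = 0" "qform G (ket 1) = 0"
  shows "\<exists>d\<ge>0. G = csmult (complex_of_real d) A1"
proof -
  have "G *v ket 1 = 0" "G *v wA = 0"
    using psd_qform_eq_0_imp_kernel G assms by blast+
  then have col1: "G $ i $ 1 = 0" and col0: "G $ i $ 0 = complex_of_real (sqrt 2) * G $ i $ 2" for i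
    using matrix_vector_mult_ket[of G 1 i] by (simp_all add: vec_eq_iff matrix_vector_mult_def
      wA_def sum_UNIV_3)
  have herm: "G $ i $ j = cnj (G $ j $ i)" for i j
    using psd_hermitian_entry[OF G] .
  define d where "d = 4 * qform G (ket 2)"
  have g22: "G $ 2 $ 2 = complex_of_real d / 4"
    unfolding d_def using psd_diag_entry[OF G] by simp
  have g20: "G $ 2 $ 0 = complex_of_real (sqrt 2) * complex_of_real d / 4"
    using col0[of 2] g22 by simp
  have g02: "G $ 0 $ 2 = complex_of_real (sqrt 2) * complex_of_real d / 4"
    using herm[of 0 2] g20 by simp
  have g00: "G $ 0 $ 0 = complex_of_real d / 2"
    using col0[of 0] g02 by (simp add: mult.assoc[symmetric])
  have g1: "G $ 1 $ j = 0" for j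
    using herm[of 1 j] col1[of j] by simp
  have "G = csmult (complex_of_real d) A1"
    using g22 g20 g02 g00 g1 col1
    by (simp add: vec_eq_iff all_UNIV_3 csmult_def A1_entries)
  moreover have "d \<ge> 0"
    unfolding d_def using psd_qform_nonneg[OF G] by simp
  ultimately show ?thesis
    by blast
qed

lemma A1_component_eq_scaled_A1:
  assumes L: "finite L" "\<forall>l\<in>L. psd (G l)" "\<forall>l\<in>L. 0 \<le> Re (c l)"
    and A1: "A1 = (\<Sum>l\<in>L. csmult (c l) (G l))"
    and l: "l \<in> L" "0 < Re (c l)"
  shows "\<exists>d\<ge>0. G l = csmult (complex_of_real d) A1"
proof (rule psd_eq_scaled_A1)
  show "psd (G l)"
    using L l by blast
  have "Re (c l) * qform (G l) x \<le> qform A1 x" for x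
    unfolding A1 using qform_sum_term_le[OF L l(1)] .
  from this[of wA] this[of "ket 1"] show "qform (G l) wA = 0" "qform (G l) (ket 1) = 0"
    using l(2) psd_qform_nonneg[OF \<open>psd (G l)\<close>] qform_A1_kernel
    by (simp_all add: order_antisym mult_le_0_iff)
qed

lemma no_norm_one_common_refinement:
  assumes L: "finite L" "\<forall>l\<in>L. psd (G l)" and norm1: "\<forall>l\<in>L. opnorm (G l) = 1"
    and p: "\<forall>l\<in>L. 0 \<le> p l" and A1: "A1 = (\<Sum>l\<in>L. csmult (complex_of_real (p l)) (G l))"
    and q: "\<forall>l\<in>L. 0 \<le> q1 l \<and> 0 \<le> q2 l \<and> q1 l + q2 l = 1"
    and B1: "B1 = (\<Sum>l\<in>L. csmult (complex_of_real (q1 l)) (G l))"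
    and B2: "mat 1 - B1 = (\<Sum>l\<in>L. csmult (complex_of_real (q2 l)) (G l))"
  shows False
proof -
  have "\<exists>l\<in>L. p l \<noteq> 0"
  proof (rule ccontr)
    assume "\<not> (\<exists>l\<in>L. p l \<noteq> 0)"
    then have "A1 = (\<Sum>l\<in>L. csmult 0 (G l))"
      unfolding A1 by (intro sum.cong) auto
    also have "\<dots> = 0"
      by (simp add: csmult_def vec_eq_iff sum.neutral)
    finally show False
      using A1_nonzero by blast
  qed
  then obtain l where l: "l \<in> L" "0 < p l"
    using p by force
  then obtain d where "d \<ge> 0" and Gl: "G l = csmult (complex_of_real d) A1"
    using A1_component_eq_scaled_A1[OF L _ A1] p by auto
  then have "1 \<le> 3/4 * d"
    using opnorm_scaled_A1_le norm1 l(1) by metis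
  have "q2 l * qform (G l) (ket 0) \<le> qform (mat 1 - B1) (ket 0)"
    using qform_sum_term_le[OF L _ l(1), of "\<lambda>l. complex_of_real (q2 l)"] q unfolding B2 by simp
  then have "q2 l = 0"
    using q l(1) \<open>1 \<le> 3/4 * d\<close>
    by (simp add: Gl qform_csmult_of_real qform_A1_values qform_B2_ket0 mult_le_0_iff)
       (meson antisym)
  then have "q1 l = 1"
    using q l(1) by auto
  have "q1 l * qform (G l) uA \<le> qform B1 uA"
    using qform_sum_term_le[OF L _ l(1), of "\<lambda>l. complex_of_real (q1 l)"] q unfolding B1 by simp
  with \<open>q1 l = 1\<close> \<open>1 \<le> 3/4 * d\<close> show False
    by (simp add: Gl qform_csmult_of_real qform_A1_values qform_B1_uA)
qed

lemma no_norm_one_joint_postprocessing: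
  "\<not> (\<exists>L G. povm L G \<and> (\<forall>l\<in>L. opnorm (G l) = 1) \<and>
          postproc {1,2} Aobs L G \<and> postproc {1,2} Bobs L G)"
proof
  assume "\<exists>L G. povm L G \<and> (\<forall>l\<in>L. opnorm (G l) = 1) \<and>
          postproc {1,2} Aobs L G \<and> postproc {1,2} Bobs L G"
  then obtain L G where "povm L G" and norm1: "\<forall>l\<in>L. opnorm (G l) = 1"
    and "postproc {1,2} Aobs L G" "postproc {1,2} Bobs L G"
    by blast
  obtain p where p: "\<forall>l\<in>L. (\<forall>k\<in>{1,2}. 0 \<le> p k l) \<and> (\<Sum>k\<in>{1,2}. p k l) = 1"
    and A: "\<forall>k\<in>{1,2}. Aobs k = (\<Sum>l\<in>L. csmult (complex_of_real (p k l)) (G l))"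
    using \<open>postproc {1,2} Aobs L G\<close> unfolding postproc_def by blast
  obtain q where q: "\<forall>l\<in>L. (\<forall>k\<in>{1,2}. 0 \<le> q k l) \<and> (\<Sum>k\<in>{1,2}. q k l) = 1"
    and B: "\<forall>k\<in>{1,2}. Bobs k = (\<Sum>l\<in>L. csmult (complex_of_real (q k l)) (G l))"
    using \<open>postproc {1,2} Bobs L G\<close> unfolding postproc_def by blast
  show False
  proof (rule no_norm_one_common_refinement)
    show "finite L" "\<forall>l\<in>L. psd (G l)"
      using \<open>povm L G\<close> by (simp_all add: povm_def)
    show "A1 = (\<Sum>l\<in>L. csmult (complex_of_real (p 1 l)) (G l))"
      and "B1 = (\<Sum>l\<in>L. csmult (complex_of_real (q 1 l)) (G l))"
      and "mat 1 - B1 = (\<Sum>l\<in>L. csmult (complex_of_real (q 2 l)) (G l))"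
      using A B by (simp_all add: Aobs_def Bobs_def)
  qed (use norm1 p q in auto)
qed

lemma trace_3: "trace M = M $ 0 $ 0 + M $ 1 $ 1 + M $ 2 $ 2"
  by (simp add: trace_def sum_UNIV_3)

lemma trace_mult_A1: "trace (\<sigma> ** A1) = cinner uA (\<sigma> *v uA) / 4"
  by (simp add: trace_def matrix_matrix_mult_def cinner_def uA_def A1_entries sum_UNIV_3
      matrix_vector_mult_def algebra_simps)

lemma trace_mult_A1_entries:
  "trace (\<sigma> ** A1) = \<sigma> $ 0 $ 0 / 2 + complex_of_real (sqrt 2) / 4 * (\<sigma> $ 0 $ 2 + \<sigma> $ 2 $ 0)
     + \<sigma> $ 2 $ 2 / 4"
  by (simp add: trace_def matrix_matrix_mult_def A1_entries sum_UNIV_3 algebra_simps)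

lemma trace_mult_B1: "trace (\<sigma> ** B1) = \<sigma> $ 0 $ 0 + \<sigma> $ 2 $ 2 / 2"
  by (simp add: trace_def matrix_matrix_mult_def B1_def csmult_def ketbra_def ket_def sum_UNIV_3)

lemma trace_mult_B2: "trace (\<sigma> ** (mat 1 - B1)) = \<sigma> $ 1 $ 1 + \<sigma> $ 2 $ 2 / 2"
  by (simp add: trace_def matrix_matrix_mult_def B1_def csmult_def ketbra_def ket_def sum_UNIV_3
      mat_def)

lemma psd_trace_mult_nonneg:
  assumes "psd \<sigma>"
  shows "0 \<le> Re (trace (\<sigma> ** A1))" "0 \<le> Re (trace (\<sigma> ** B1))"
    "0 \<le> Re (trace (\<sigma> ** (mat 1 - B1)))"
  using psd_qform_nonneg[OF assms] psd_diag_entry[OF assms]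
  by (simp_all add: trace_mult_A1 trace_mult_B1 trace_mult_B2 qform_def)

text \<open>A state invisible to \<open>B\<^sub>2\<close> is \<open>|0\<rangle>\<langle>0|\<close>.\<close>
lemma density_trace_B2_eq_0:
  assumes "density \<sigma>" "Re (trace (\<sigma> ** (mat 1 - B1))) = 0"
  shows "trace (\<sigma> ** A1) = 1/2" "trace (\<sigma> ** B1) = 1"
proof -
  have \<sigma>: "psd \<sigma>" "trace \<sigma> = 1"
    using assms(1) by (simp_all add: density_def)
  have "qform \<sigma> (ket 1) + qform \<sigma> (ket 2) / 2 = 0"
    using assms(2) by (simp add: trace_mult_B2 psd_diag_entry[OF \<sigma>(1)])
  then have "qform \<sigma> (ket 1) = 0" "qform \<sigma> (ket 2) = 0"
    using psd_qform_nonneg[OF \<sigma>(1), of "ket 1"] psd_qform_nonneg[OF \<sigma>(1), of "ket 2"]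
    by linarith+
  then have s11: "\<sigma> $ 1 $ 1 = 0" and s22: "\<sigma> $ 2 $ 2 = 0"
    using psd_diag_entry[OF \<sigma>(1)] by simp_all
  have "\<sigma> *v ket 2 = 0"
    using psd_qform_eq_0_imp_kernel \<sigma>(1) \<open>qform \<sigma> (ket 2) = 0\<close> by blast
  then have "\<sigma> $ i $ 2 = 0" for i
    using matrix_vector_mult_ket[of \<sigma> 2 i] by simp
  moreover from this have "\<sigma> $ 2 $ 0 = 0"
    using psd_hermitian_entry[OF \<sigma>(1), of 2 0] by simp
  moreover have "\<sigma> $ 0 $ 0 = 1"
    using \<sigma>(2) s11 s22 by (simp add: trace_3)
  ultimately show "trace (\<sigma> ** A1) = 1/2" "trace (\<sigma> ** B1) = 1"
    using s22 by (simp_all add: trace_mult_A1_entries trace_mult_B1)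
qed

lemma noncontextual_term_bound:
  assumes L: "finite L" "\<forall>l\<in>L. psd (G l)" and \<sigma>: "\<forall>l\<in>L. density (\<sigma> l)"
    and A1: "A1 = (\<Sum>l\<in>L. csmult (trace (\<sigma> l ** A1)) (G l))"
    and B2: "mat 1 - B1 = (\<Sum>l\<in>L. csmult (trace (\<sigma> l ** (mat 1 - B1))) (G l))"
    and m: "m \<in> L"
  shows "Re (trace (\<sigma> m ** A1)) * qform (G m) uA
           \<le> Re (trace (\<sigma> m ** B1)) * qform (G m) uA / 2"
proof -
  have nonneg: "0 \<le> Re (trace (\<sigma> l ** A1))" "0 \<le> Re (trace (\<sigma> l ** B1))"
    "0 \<le> Re (trace (\<sigma> l ** (mat 1 - B1)))" if "l \<in> L" for l
    using psd_trace_mult_nonneg \<sigma> that by (auto simp: density_def)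
  have rhs_nonneg: "0 \<le> Re (trace (\<sigma> m ** B1)) * qform (G m) uA / 2"
    using nonneg(2)[OF m] psd_qform_nonneg L(2) m by simp
  show ?thesis
  proof (cases "Re (trace (\<sigma> m ** A1)) = 0")
    case True
    then show ?thesis
      using rhs_nonneg by simp
  next
    case False
    then have "0 < Re (trace (\<sigma> m ** A1))"
      using nonneg(1)[OF m] by simp
    moreover have "\<forall>l\<in>L. 0 \<le> Re (trace (\<sigma> l ** A1))"
      using nonneg(1) by blast
    ultimately obtain d where "d \<ge> 0" and Gm: "G m = csmult (complex_of_real d) A1"
      using A1_component_eq_scaled_A1[OF L _ A1 m] by blast
    have "Re (trace (\<sigma> m ** (mat 1 - B1))) * qform (G m) (ket 0) \<le> qform (mat 1 - B1) (ket 0)"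
      using qform_sum_term_le[OF L _ m, of "\<lambda>l. trace (\<sigma> l ** (mat 1 - B1))"] nonneg(3)
      by (simp only: B2[symmetric] ball_simps) blast
    then have "Re (trace (\<sigma> m ** (mat 1 - B1))) * d \<le> 0"
      by (simp add: Gm qform_csmult_of_real qform_A1_values qform_B2_ket0)
    then consider "d = 0" | "Re (trace (\<sigma> m ** (mat 1 - B1))) = 0"
      using \<open>d \<ge> 0\<close> nonneg(3)[OF m] by (smt (verit) mult_pos_pos)
    then show ?thesis
    proof cases
      case 1
      then show ?thesis
        using qform_csmult_of_real[of d A1 uA] by (simp add: Gm)
    next
      case 2
      then have "trace (\<sigma> m ** A1) = 1/2" "trace (\<sigma> m ** B1) = 1"
        using density_trace_B2_eq_0[of "\<sigma> m"] \<sigma> m by blast+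
      then show ?thesis
        by (simp only:) simp
    qed
  qed
qed

lemma allows_contextuality_proof_A_B: "allows_contextuality_proof {({1,2}, Aobs), ({1,2}, Bobs)}"
  unfolding allows_contextuality_proof_def
proof
  assume "\<exists>L G \<sigma>. povm L G \<and> (\<forall>l\<in>L. density (\<sigma> l)) \<and>
    (\<forall>(K, A)\<in>{({1,2}, Aobs), ({1,2}, Bobs)}. \<forall>k\<in>K.
       A k = (\<Sum>l\<in>L. csmult (trace (\<sigma> l ** A k)) (G l)))"
  then obtain L G \<sigma> where "povm L G" and \<sigma>: "\<forall>l\<in>L. density (\<sigma> l)"
    and eqs: "\<forall>(K, A)\<in>{({1,2}, Aobs), ({1,2}, Bobs)}. \<forall>k\<in>K.
       A k = (\<Sum>l\<in>L. csmult (trace (\<sigma> l ** A k)) (G l))"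
    by blast
  have "Aobs 1 = (\<Sum>l\<in>L. csmult (trace (\<sigma> l ** Aobs 1)) (G l))"
    "Bobs 1 = (\<Sum>l\<in>L. csmult (trace (\<sigma> l ** Bobs 1)) (G l))"
    "Bobs 2 = (\<Sum>l\<in>L. csmult (trace (\<sigma> l ** Bobs 2)) (G l))"
    using eqs[unfolded ball_simps prod.case] by blast+
  \<comment> \<open>\<open>A1\<close> and \<open>B1\<close> occur on both sides, so these equations are only used right to left.\<close>
  then have A1: "A1 = (\<Sum>l\<in>L. csmult (trace (\<sigma> l ** A1)) (G l))"
    and B1: "B1 = (\<Sum>l\<in>L. csmult (trace (\<sigma> l ** B1)) (G l))"
    and B2: "mat 1 - B1 = (\<Sum>l\<in>L. csmult (trace (\<sigma> l ** (mat 1 - B1))) (G l))"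
    by (simp_all only: Aobs_def Bobs_def if_True if_False simp_thms numeral_eq_one_iff semiring_norm)
  from \<open>povm L G\<close> have L: "finite L" "\<forall>l\<in>L. psd (G l)"
    by (simp_all add: povm_def)
  have "9/4 = qform A1 uA"
    by (simp add: qform_A1_values)
  also have "\<dots> = (\<Sum>l\<in>L. Re (trace (\<sigma> l ** A1)) * qform (G l) uA)"
    by (simp only: qform_sum[OF L, symmetric] A1[symmetric])
  also have "\<dots> \<le> (\<Sum>l\<in>L. Re (trace (\<sigma> l ** B1)) * qform (G l) uA / 2)"
    by (rule sum_mono) (rule noncontextual_term_bound[OF L \<sigma> A1 B2])
  also have "\<dots> = qform B1 uA / 2"
    by (simp only: sum_divide_distrib[symmetric] qform_sum[OF L, symmetric] B1[symmetric])
  finally show False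
    by (simp add: qform_B1_uA)
qed

theorem mainTheorem6:
  shows "(\<not> (\<exists>L G. povm L G \<and> (\<forall>l\<in>L. opnorm (G l) = 1) \<and>
                postproc {1,2} Aobs L G \<and> postproc {1,2} Bobs L G))
         \<and> allows_contextuality_proof {({1,2}, Aobs), ({1,2}, Bobs)}"
  using no_norm_one_joint_postprocessing allows_contextuality_proof_A_B by blast

end
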